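(* Let $0<q<1$ and let $f,h$ satisfy $0<h\le f^q$. Then there exists a non-increasing continuous function $g:(0,1]\to\mathbb{R}^+$ such that $\int_0^1 g(u)\,du=f$, $\int_0^1 g^q(u)\,du=h$, and $$\frac1t\int_0^t g(u)\,du=\omega_q\Big(\frac{f^q}{h}\Big)^{1/q}g(t)\quad\text{for all }t\in(0,1].$$
   Context: Here $\omega_q(z)=[H_q^{-1}(z)]^q$ for $z\ge1$, where $H_q(z)=(1-q)z^q+qz^{q-1}$ on $[1,\infty)$ (a strictly increasing bijection onto $[1,\infty)$). *)

theory Defs
  imports "HOL-Analysis.Analysis"
begin

definition H :: "real \<Rightarrow> real \<Rightarrow> real" where
  "H q z = (1 - q) * z powr q + q * z powr (q - 1)"

definition omega :: "real \<Rightarrow> real \<Rightarrow> real" where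
  "omega q z = (THE y. 1 \<le> y \<and> H q y = z) powr q"

end

theory Submission
  imports Defs
begin

text \<open>The extremal profile is a power function \<open>g u = (f / z) * u powr (1 / z - 1)\<close>
  with \<open>z \<ge> 1\<close>: its running mean over \<open>(0, t]\<close> is exactly \<open>z * g t\<close>, its total mass is \<open>f\<close>,
  and the mass of \<open>g powr q\<close> is \<open>f powr q / H q z\<close>. Hence one has to pick \<open>z\<close> with
  \<open>H q z = f powr q / h\<close>, which is possible and unique because \<open>H q\<close> increases strictly
  from \<open>H q 1 = 1\<close> to infinity on \<open>[1, \<infinity>)\<close>; then \<open>z = omega q (f powr q / h) powr (1 / q)\<close>.\<close>

lemma has_integral_powr_from_0_Ioc:
  fixes a c :: real
  assumes "a > -1" "c \<ge> 0"
  shows "((\<lambda>x. x powr a) has_integral (c powr (a + 1) / (a + 1))) {0<..c}"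
proof -
  have "((\<lambda>x. x powr a) has_integral (c powr (a + 1) / (a + 1))) {0..c} \<longleftrightarrow>
        ((\<lambda>x. x powr a) has_integral (c powr (a + 1) / (a + 1))) {0<..c}"
    by (rule has_integral_spike_set_eq; rule negligible_subset[of "{0}"]) auto
  then show ?thesis
    using has_integral_powr_from_0[OF assms] by simp
qed

lemma H_eq_powr_mult:
  assumes "0 < z"
  shows "H q z = z powr q * (1 + q * (1 / z - 1))"
  using assms by (simp add: H_def powr_diff field_simps)

lemma H_strict_mono_on:
  assumes "0 < q" "q < 1"
  shows "strict_mono_on {1..} (H q)"
proof (rule strict_mono_onI)
  fix x y :: real
  assume "x \<in> {1..}" "y \<in> {1..}" "x < y"
  show "H q x < H q y"
  proof (rule DERIV_pos_imp_increasing_open[OF \<open>x < y\<close>])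
    fix t assume "x < t" "t < y"
    with \<open>x \<in> {1..}\<close> have "t > 1" by simp
    have "DERIV (H q) t :> (1 - q) * (q * t powr (q - 1)) + q * ((q - 1) * t powr (q - 2))"
      unfolding H_def using \<open>t > 1\<close> by (auto intro!: derivative_eq_intros)
    moreover have "t powr (q - 1) = t powr (q - 2) * t"
      using powr_add[of t "q - 2" 1] \<open>t > 1\<close> by simp
    then have "(1 - q) * (q * t powr (q - 1)) + q * ((q - 1) * t powr (q - 2))
        = q * (1 - q) * t powr (q - 2) * (t - 1)"
      by (simp add: algebra_simps)
    moreover have "q * (1 - q) * t powr (q - 2) * (t - 1) > 0"
      using assms \<open>t > 1\<close> by simp
    ultimately show "\<exists>d. DERIV (H q) t :> d \<and> d > 0" by metis
  next
    show "continuous_on {x..y} (H q)"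
      unfolding H_def using \<open>x \<in> {1..}\<close> by (auto intro!: continuous_intros)
  qed
qed

lemma H_surj_on:
  assumes "0 < q" "q < 1" "1 \<le> c"
  shows "\<exists>z\<ge>1. H q z = c"
proof -
  define M where "M = max 1 ((c / (1 - q)) powr (1 / q))"
  have "M \<ge> 1" unfolding M_def by simp
  have "c / (1 - q) = ((c / (1 - q)) powr (1 / q)) powr q"
    using assms by (simp add: powr_powr)
  also have "\<dots> \<le> M powr q"
    unfolding M_def using assms by (intro powr_mono2) auto
  finally have "c \<le> (1 - q) * M powr q"
    using assms by (simp add: field_simps)
  also have "\<dots> \<le> H q M"
    using assms \<open>M \<ge> 1\<close> by (simp add: H_def)
  finally have "c \<le> H q M" .
  moreover have "H q 1 \<le> c"
    using assms by (simp add: H_def)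
  moreover have "\<forall>x. 1 \<le> x \<and> x \<le> M \<longrightarrow> isCont (H q) x"
    unfolding H_def by (auto intro!: continuous_intros)
  ultimately show ?thesis
    using IVT[of "H q" 1 c M] \<open>M \<ge> 1\<close> by blast
qed

lemma omega_H:
  assumes "0 < q" "q < 1" "1 \<le> z"
  shows "omega q (H q z) = z powr q"
proof -
  have "(THE y. 1 \<le> y \<and> H q y = H q z) = z"
    using assms strict_mono_on_eqD[OF H_strict_mono_on[OF assms(1,2)]]
    by (intro the_equality) auto
  then show ?thesis
    by (simp add: omega_def)
qed

lemma has_integral_powr_profile:
  fixes A z t :: real
  assumes "0 < z" "0 \<le> t"
  shows "((\<lambda>u. A * u powr (1 / z - 1)) has_integral A * z * t powr (1 / z)) {0<..t}"
  using has_integral_mult_right[OF has_integral_powr_from_0_Ioc[of "1 / z - 1" t], of A] assms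
  by (simp add: mult_ac)

lemma powr_profile_mean:
  fixes A z t :: real
  assumes "0 < z" "0 < t"
  shows "(1 / t) * integral {0<..t} (\<lambda>u. A * u powr (1 / z - 1)) = z * (A * t powr (1 / z - 1))"
proof -
  have integral_eq: "integral {0<..t} (\<lambda>u. A * u powr (1 / z - 1)) = A * z * t powr (1 / z)"
    using assms by (intro integral_unique has_integral_powr_profile) auto
  have "t powr (1 / z) = t * t powr (1 / z - 1)"
    using powr_add[of t 1 "1 / z - 1"] assms by simp
  then show ?thesis
    unfolding integral_eq using assms by simp
qed

lemma powr_profile_antimono:
  fixes A z u v :: real
  assumes "0 \<le> A" "1 \<le> z" "0 < u" "u \<le> v"
  shows "A * v powr (1 / z - 1) \<le> A * u powr (1 / z - 1)"
  using assms by (intro mult_left_mono powr_mono2') auto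

lemma has_integral_powr_profile_powr:
  fixes A q z :: real
  assumes "0 < A" "0 \<le> q" "q < 1" "1 \<le> z"
  shows "((\<lambda>u. (A * u powr (1 / z - 1)) powr q) has_integral (A * z) powr q / H q z) {0<..1}"
proof -
  have "-1 \<le> 1 / z - 1"
    using assms by simp
  then have "- q \<le> (1 / z - 1) * q"
    using mult_right_mono[of "-1" "1 / z - 1" q] assms by simp
  then have "(1 / z - 1) * q > -1"
    using assms by linarith
  then have "((\<lambda>u. A powr q * u powr ((1 / z - 1) * q)) has_integral
      A powr q / ((1 / z - 1) * q + 1)) {0<..1}"
    using has_integral_mult_right[OF has_integral_powr_from_0_Ioc, of _ 1 "A powr q"] by simp
  moreover have "(A * z) powr q / H q z = A powr q * z powr q / (z powr q * ((1 / z - 1) * q + 1))"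
    using assms by (simp add: H_eq_powr_mult powr_mult mult.commute)
  then have "A powr q / ((1 / z - 1) * q + 1) = (A * z) powr q / H q z"
    using assms by simp
  ultimately show ?thesis
    using assms by (subst has_integral_cong[where g = "\<lambda>u. A powr q * u powr ((1 / z - 1) * q)"])
      (auto simp: powr_mult powr_powr)
qed

theorem lemma4p1:
  fixes q f h :: real
  assumes "0 < q" "q < 1" "0 < f" "0 < h" "h \<le> f powr q"
  shows "\<exists>g :: real \<Rightarrow> real.
           (\<forall>u\<in>{0<..1}. 0 < g u)
         \<and> (\<forall>u\<in>{0<..1}. \<forall>v\<in>{0<..1}. u \<le> v \<longrightarrow> g v \<le> g u)
         \<and> continuous_on {0<..1} g
         \<and> (g has_integral f) {0<..1}
         \<and> ((\<lambda>u. g u powr q) has_integral h) {0<..1}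
         \<and> (\<forall>t\<in>{0<..1}. (1 / t) * integral {0<..t} g
               = (omega q (f powr q / h)) powr (1 / q) * g t)"
proof -
  obtain z where "1 \<le> z" and Hz: "H q z = f powr q / h"
    using H_surj_on[of q "f powr q / h"] assms by auto
  have omega_root: "omega q (f powr q / h) powr (1 / q) = z"
    using omega_H[of q z] assms \<open>1 \<le> z\<close> Hz by (simp add: powr_powr)
  define g where "g = (\<lambda>u. (f / z) * u powr (1 / z - 1))"
  show ?thesis
  proof (intro exI[of _ g] conjI ballI impI)
    show "(g has_integral f) {0<..1}"
      using has_integral_powr_profile[of z 1 "f / z"] \<open>1 \<le> z\<close> by (simp add: g_def)
    show "((\<lambda>u. g u powr q) has_integral h) {0<..1}"
      using has_integral_powr_profile_powr[of "f / z" q z] assms \<open>1 \<le> z\<close> Hz by (simp add: g_def)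
    show "(1 / t) * integral {0<..t} g = omega q (f powr q / h) powr (1 / q) * g t"
      if "t \<in> {0<..1}" for t
      using powr_profile_mean[of z t "f / z"] omega_root \<open>1 \<le> z\<close> that by (simp add: g_def)
    show "g v \<le> g u" if "u \<in> {0<..1}" "v \<in> {0<..1}" "u \<le> v" for u v
      using powr_profile_antimono[of "f / z" z u v] assms \<open>1 \<le> z\<close> that unfolding g_def by simp
  qed (use assms \<open>1 \<le> z\<close> in \<open>auto simp: g_def intro!: continuous_intros\<close>)
qed

end
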